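(* Consider $N$ users, each $n$ equipped with the general single-user data below (with its own $K_n$, $P_n$, $\mathcal E$, $\zeta_n$, $\beta_n$, $\tau_n$, $D_n$), a probability vector $\boldsymbol\eta_n=(\eta_n^1,\dots,\eta_n^{K_n})$ (the stationary distribution of its channel) and an arrival rate $a_n\ge0$; let $B>0$. Writing $V_n^\lambda$, $V_n^{l,\lambda}$, $V_n^{u,\lambda}$ for the functions below at multiplier $\lambda$, define for $\lambda\ge0$ $$g_P(\lambda)=\lambda B+\sum_{n=1}^N a_n\sum_{i}\eta_n^iV_n^\lambda(0,\tau_n+D_n,i),$$ $$g_P^u(\lambda)=\lambda B+\sum_{n=1}^N a_n\min\{\beta_n,V_n^{u,\lambda}(\tau_n+D_n)\},\quad g_P^l(\lambda)=\lambda B+\sum_{n=1}^N a_n\max\{0,V_n^{l,\lambda}(\tau_n+D_n)\}.$$ Then $g_P^l(\lambda)\le g_P(\lambda)\le g_P^u(\lambda)$ for all $\lambda\ge0$, and $$\min_{\lambda\ge0}g_P^l(\lambda)\le\min_{\lambda\ge0}g_P(\lambda)\le\min_{\lambda\ge0}g_P^u(\lambda).$$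
   Context: General single-user data for user $n$: $\beta_n\ge0$, integers $\tau_n\ge1$, $D_n\ge0$; a Markov channel on $\{1,\dots,K_n\}$ with transition matrix $(P_n^{i,j})$; a finite set $\mathcal E\subset[0,\infty)$ containing $0$ and a positive element; $\zeta_n(i,\cdot):\mathcal E\to[0,1]$ with $\zeta_n(i,0)=0$, $\zeta_n(i,e)>0$ for $e>0$, strictly increasing; states totally ordered by $\zeta_n$ (for all $i,j$ either $\zeta_n(i,e)\ge\zeta_n(j,e)\ \forall e$ or $\le\ \forall e$), with $i_n^{\max}$, $i_n^{\min}$ states of maximal and minimal $\zeta_n(\cdot,e)$ for all $e$. Value function: $V_n(0,0,i)=0$, $V_n(0,\tau,i)=\max_{e\in\mathcal E}\{-\lambda e+\zeta_n(i,e)\beta_n+(1-\zeta_n(i,e))\sum_jP_n^{i,j}V_n(0,\tau-1,j)\}$ for $1\le\tau\le\tau_n+D_n$. Bounds: $V_n^l(0)=0$, $V_n^l(\tau)=\max_{e\in\mathcal E,e>0}\frac{1-[1-\zeta_n(i_n^{\min},e)]^{\tau}}{\zeta_n(i_n^{\min},e)}[-\lambda e+\zeta_n(i_n^{\min},e)\beta_n]$; $V_n^u(0)=0$, $V_n^u(\tau)=\sum_{z=1}^{\tau}\max_{e\in\mathcal E}\{-\lambda e+\zeta_n(i_n^{\max},e)(\beta_n-\max\{0,V_n^l(z-1)\})\}$. $g_P$ is the Lagrange dual function of the weighted timely-throughput problem with perfect prediction and $\min g_P$ the optimal weighted timely-throughput. *)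

theory Defs
  imports Complex_Main
begin

text \<open>Arguments: action set E, success probabilities zeta (state, energy), transition
  matrix P (states 1..K), number of states K, reward beta, multiplier lam,
  remaining time tau, channel state i.\<close>
primrec Vval :: "real set \<Rightarrow> (nat \<Rightarrow> real \<Rightarrow> real) \<Rightarrow> (nat \<Rightarrow> nat \<Rightarrow> real) \<Rightarrow> nat
    \<Rightarrow> real \<Rightarrow> real \<Rightarrow> nat \<Rightarrow> nat \<Rightarrow> real" where
  "Vval E zeta P K beta lam 0 i = 0"
| "Vval E zeta P K beta lam (Suc t) i =
     Max ((\<lambda>e. - lam * e + zeta i e * beta
              + (1 - zeta i e) * (\<Sum>j=1..K. P i j * Vval E zeta P K beta lam t j)) ` E)"

text \<open>Lower bound V^l(tau); zmin = zeta(i_min, .).\<close>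
definition Vlow :: "real set \<Rightarrow> (real \<Rightarrow> real) \<Rightarrow> real \<Rightarrow> real \<Rightarrow> nat \<Rightarrow> real" where
  "Vlow E zmin beta lam tau =
     (if tau = 0 then 0
      else Max ((\<lambda>e. (1 - (1 - zmin e) ^ tau) / zmin e * (- lam * e + zmin e * beta))
                 ` {e \<in> E. e > 0}))"

text \<open>Upper bound V^u(tau); zmax = zeta(i_max, .), zmin = zeta(i_min, .).\<close>
primrec Vup :: "real set \<Rightarrow> (real \<Rightarrow> real) \<Rightarrow> (real \<Rightarrow> real) \<Rightarrow> real \<Rightarrow> real \<Rightarrow> nat \<Rightarrow> real" where
  "Vup E zmax zmin beta lam 0 = 0"
| "Vup E zmax zmin beta lam (Suc t) = Vup E zmax zmin beta lam t
     + Max ((\<lambda>e. - lam * e + zmax e * (beta - max 0 (Vlow E zmin beta lam t))) ` E)"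

definition gP :: "nat \<Rightarrow> real \<Rightarrow> (nat \<Rightarrow> real) \<Rightarrow> (nat \<Rightarrow> nat \<Rightarrow> real) \<Rightarrow> real set
    \<Rightarrow> (nat \<Rightarrow> nat \<Rightarrow> real \<Rightarrow> real) \<Rightarrow> (nat \<Rightarrow> nat \<Rightarrow> nat \<Rightarrow> real) \<Rightarrow> (nat \<Rightarrow> nat)
    \<Rightarrow> (nat \<Rightarrow> real) \<Rightarrow> (nat \<Rightarrow> nat) \<Rightarrow> (nat \<Rightarrow> nat) \<Rightarrow> real \<Rightarrow> real" where
  "gP N B a eta E zeta P K beta tau D lam =
     lam * B + (\<Sum>n=1..N. a n * (\<Sum>i=1..K n. eta n i *
        Vval E (zeta n) (P n) (K n) (beta n) lam (tau n + D n) i))"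

definition gPu :: "nat \<Rightarrow> real \<Rightarrow> (nat \<Rightarrow> real) \<Rightarrow> real set
    \<Rightarrow> (nat \<Rightarrow> nat \<Rightarrow> real \<Rightarrow> real) \<Rightarrow> (nat \<Rightarrow> nat) \<Rightarrow> (nat \<Rightarrow> nat)
    \<Rightarrow> (nat \<Rightarrow> real) \<Rightarrow> (nat \<Rightarrow> nat) \<Rightarrow> (nat \<Rightarrow> nat) \<Rightarrow> real \<Rightarrow> real" where
  "gPu N B a E zeta imax imin beta tau D lam =
     lam * B + (\<Sum>n=1..N. a n * min (beta n)
        (Vup E (zeta n (imax n)) (zeta n (imin n)) (beta n) lam (tau n + D n)))"

definition gPl :: "nat \<Rightarrow> real \<Rightarrow> (nat \<Rightarrow> real) \<Rightarrow> real set
    \<Rightarrow> (nat \<Rightarrow> nat \<Rightarrow> real \<Rightarrow> real) \<Rightarrow> (nat \<Rightarrow> nat)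
    \<Rightarrow> (nat \<Rightarrow> real) \<Rightarrow> (nat \<Rightarrow> nat) \<Rightarrow> (nat \<Rightarrow> nat) \<Rightarrow> real \<Rightarrow> real" where
  "gPl N B a E zeta imin beta tau D lam =
     lam * B + (\<Sum>n=1..N. a n * max 0
        (Vlow E (zeta n (imin n)) (beta n) lam (tau n + D n)))"

end

theory Submission
  imports Defs
begin

text \<open>The bounds are proved user by user and summed with the weights \<open>a\<^sub>n \<ge> 0\<close>.
  Spending a fixed energy \<open>e\<close> in every slot while the channel stays in its worst state \<open>i\<^sub>m\<^sub>i\<^sub>n\<close>
  (success probability \<open>z\<close>) earns \<open>(1 - (1 - z)\<^sup>t) / z \<cdot> (z \<beta> - \<lambda> e)\<close>; by induction on \<open>t\<close>
  this is at most \<open>V\<^sub>t\<close> in every state, which gives the lower bound. For the upper bound, one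
  Bellman step raises \<open>V\<close> above its one-step expectation \<open>S\<close> by at most
  \<open>max\<^sub>e (\<zeta>(i\<^sub>m\<^sub>a\<^sub>x, e)(\<beta> - max 0 V\<^sup>l) - \<lambda> e)\<close>, because \<open>max 0 V\<^sup>l \<le> S \<le> \<beta>\<close>; averaging over the
  stationary distribution \<open>\<eta>\<close> turns the expectation back into the \<open>\<eta>\<close>-average of \<open>V\<close>, so the
  increments add up to \<open>V\<^sup>u\<close>. Finally the three dual functions are continuous in \<open>\<lambda>\<close> and bounded
  below by \<open>\<lambda> B\<close>, so each attains its minimum on \<open>[0, g(0)/B]\<close>.\<close>

lemma convex_comb_ge:
  fixes w x :: "'a \<Rightarrow> real"
  assumes "\<forall>j\<in>A. 0 \<le> w j" "sum w A = 1" "\<forall>j\<in>A. c \<le> x j"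
  shows "c \<le> (\<Sum>j\<in>A. w j * x j)"
proof -
  have "c = (\<Sum>j\<in>A. w j * c)" using assms(2) by (simp add: sum_distrib_right[symmetric])
  also have "\<dots> \<le> (\<Sum>j\<in>A. w j * x j)" using assms by (intro sum_mono mult_left_mono) auto
  finally show ?thesis .
qed

lemma convex_comb_le:
  fixes w x :: "'a \<Rightarrow> real"
  assumes "\<forall>j\<in>A. 0 \<le> w j" "sum w A = 1" "\<forall>j\<in>A. x j \<le> c"
  shows "(\<Sum>j\<in>A. w j * x j) \<le> c"
proof -
  have "(\<Sum>j\<in>A. w j * x j) \<le> (\<Sum>j\<in>A. w j * c)" using assms by (intro sum_mono mult_left_mono) auto
  also have "\<dots> = c" using assms(2) by (simp add: sum_distrib_right[symmetric])
  finally show ?thesis .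
qed

lemma stationary_sum:
  fixes eta x :: "'a \<Rightarrow> real"
  assumes "\<forall>j\<in>A. (\<Sum>i\<in>A. eta i * P i j) = eta j"
  shows "(\<Sum>i\<in>A. eta i * (\<Sum>j\<in>A. P i j * x j)) = (\<Sum>j\<in>A. eta j * x j)"
proof -
  have "(\<Sum>i\<in>A. eta i * (\<Sum>j\<in>A. P i j * x j)) = (\<Sum>j\<in>A. (\<Sum>i\<in>A. eta i * P i j) * x j)"
    by (simp add: sum_distrib_left sum_distrib_right mult.assoc) (rule sum.swap)
  also have "\<dots> = (\<Sum>j\<in>A. eta j * x j)" using assms by simp
  finally show ?thesis .
qed

lemma continuous_on_Max_image:
  fixes f :: "'a::topological_space \<Rightarrow> 'b \<Rightarrow> real"
  assumes "finite A" "A \<noteq> {}" "\<And>e. e \<in> A \<Longrightarrow> continuous_on S (\<lambda>x. f x e)"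
  shows "continuous_on S (\<lambda>x. Max (f x ` A))"
  using assms
proof (induction A rule: finite_ne_induct)
  case (singleton e)
  then show ?case by simp
next
  case (insert e F)
  then have "continuous_on S (\<lambda>x. max (f x e) (Max (f x ` F)))"
    by (intro continuous_on_max) auto
  with insert show ?case by simp
qed

lemma coercive_attains_min:
  fixes g :: "real \<Rightarrow> real"
  assumes cont: "continuous_on UNIV g" and B: "B > 0" and lower: "\<forall>lam\<ge>0. lam * B \<le> g lam"
  shows "\<exists>x\<ge>0. \<forall>lam\<ge>0. g x \<le> g lam"
proof -
  define M where "M = g 0 / B"
  have M: "0 \<le> M" "M * B = g 0" using lower B by (auto simp: M_def)
  obtain x where x: "x \<in> {0..M}" "\<forall>y\<in>{0..M}. g x \<le> g y"
    using continuous_attains_inf[OF compact_Icc, of 0 M g] M continuous_on_subset[OF cont] by auto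
  have "g x \<le> g lam" if "0 \<le> lam" for lam
  proof (cases "lam \<le> M")
    case True
    then show ?thesis using x that by auto
  next
    case False
    have "g x \<le> M * B" using x M by auto
    also have "\<dots> \<le> lam * B" using False B by (intro mult_right_mono) auto
    also have "\<dots> \<le> g lam" using lower that by auto
    finally show ?thesis .
  qed
  then show ?thesis using x by auto
qed

lemma sandwiched_minima:
  fixes gl g gu :: "real \<Rightarrow> real"
  assumes B: "B > 0"
    and cont: "continuous_on UNIV gl" "continuous_on UNIV g" "continuous_on UNIV gu"
    and lower: "\<forall>lam\<ge>0. lam * B \<le> gl lam"
    and sandwich: "\<forall>lam\<ge>0. gl lam \<le> g lam \<and> g lam \<le> gu lam"
  shows "\<exists>ll\<ge>0. \<exists>lp\<ge>0. \<exists>lu\<ge>0.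
      (\<forall>lam\<ge>0. gl ll \<le> gl lam) \<and> (\<forall>lam\<ge>0. g lp \<le> g lam) \<and> (\<forall>lam\<ge>0. gu lu \<le> gu lam)
      \<and> gl ll \<le> g lp \<and> g lp \<le> gu lu"
proof -
  have lower': "\<forall>lam\<ge>0. lam * B \<le> g lam" "\<forall>lam\<ge>0. lam * B \<le> gu lam"
    using lower sandwich by force+
  obtain ll where ll: "ll \<ge> 0" "\<forall>lam\<ge>0. gl ll \<le> gl lam"
    using coercive_attains_min[OF cont(1) B lower] by blast
  obtain lp where lp: "lp \<ge> 0" "\<forall>lam\<ge>0. g lp \<le> g lam"
    using coercive_attains_min[OF cont(2) B lower'(1)] by blast
  obtain lu where lu: "lu \<ge> 0" "\<forall>lam\<ge>0. gu lu \<le> gu lam"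
    using coercive_attains_min[OF cont(3) B lower'(2)] by blast
  have "gl ll \<le> gl lp" "g lp \<le> g lu" using ll lp lu by auto
  then have "gl ll \<le> g lp" "g lp \<le> gu lu" using sandwich lp(1) lu(1) by force+
  with ll lp lu show ?thesis by blast
qed

lemma continuous_on_Vval:
  assumes "finite E" "E \<noteq> {}"
  shows "continuous_on UNIV (\<lambda>lam. Vval E zeta P K beta lam t i)"
proof (induction t arbitrary: i)
  case 0
  then show ?case by simp
next
  case (Suc t)
  show ?case unfolding Vval.simps
    by (rule continuous_on_Max_image[OF assms]) (auto intro!: continuous_intros Suc)
qed

lemma continuous_on_Vlow:
  assumes "finite E"
  shows "continuous_on UNIV (\<lambda>lam. Vlow E zmin beta lam t)"
proof (cases "t = 0 \<or> {e \<in> E. e > 0} = {}")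
  case True
  then have "(\<lambda>lam. Vlow E zmin beta lam t) = (\<lambda>_. Vlow E zmin beta 0 t)"
    by (intro ext) (auto simp add: Vlow_def simp del: Collect_empty_eq)
  then show ?thesis by (simp only: continuous_on_const)
next
  case False
  then have "t \<noteq> 0" by simp
  then show ?thesis unfolding Vlow_def if_not_P[OF \<open>t \<noteq> 0\<close>]
    by (intro continuous_on_Max_image continuous_on_mult_left continuous_intros) (use assms False in auto)
qed

lemma continuous_on_Vup:
  assumes "finite E" "E \<noteq> {}"
  shows "continuous_on UNIV (\<lambda>lam. Vup E zmax zmin beta lam t)"
proof (induction t)
  case 0
  then show ?case by simp
next
  case (Suc t)
  show ?case unfolding Vup.simps
    by (intro continuous_on_add Suc continuous_on_Max_image[OF assms])
       (auto intro!: continuous_intros continuous_on_Vlow assms)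
qed

lemma continuous_on_gP:
  assumes "finite E" "E \<noteq> {}"
  shows "continuous_on UNIV (gP N B a eta E zeta P K beta tau D)"
  unfolding gP_def[abs_def] by (intro continuous_intros continuous_on_Vval assms)

lemma continuous_on_gPl:
  assumes "finite E"
  shows "continuous_on UNIV (gPl N B a E zeta imin beta tau D)"
  unfolding gPl_def[abs_def] by (intro continuous_intros continuous_on_Vlow assms)

lemma continuous_on_gPu:
  assumes "finite E" "E \<noteq> {}"
  shows "continuous_on UNIV (gPu N B a E zeta imax imin beta tau D)"
  unfolding gPu_def[abs_def] by (intro continuous_intros continuous_on_Vup assms)

definition fixed_action_value :: "real \<Rightarrow> real \<Rightarrow> real \<Rightarrow> real \<Rightarrow> nat \<Rightarrow> real" where
  "fixed_action_value z beta lam e t = (1 - (1 - z) ^ t) / z * (- lam * e + z * beta)"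

lemma fixed_action_value_0 [simp]: "fixed_action_value z beta lam e 0 = 0"
  by (simp add: fixed_action_value_def)

lemma fixed_action_value_Suc:
  assumes "z \<noteq> 0"
  shows "fixed_action_value z beta lam e (Suc t)
    = - lam * e + z * beta + (1 - z) * fixed_action_value z beta lam e t"
  using assms by (simp add: fixed_action_value_def field_simps)

lemma fixed_action_value_le:
  assumes "0 \<le> lam" "0 \<le> e" "0 < z" "z \<le> 1" "0 \<le> beta"
  shows "fixed_action_value z beta lam e t \<le> beta"
proof (induction t)
  case 0
  then show ?case using assms by simp
next
  case (Suc t)
  let ?W = "fixed_action_value z beta lam e t"
  have "(1 - z) * ?W \<le> (1 - z) * beta" using Suc assms by (intro mult_left_mono) auto
  moreover have "0 \<le> lam * e" using assms by simp
  moreover have "fixed_action_value z beta lam e (Suc t) = - lam * e + z * beta + (1 - z) * ?W"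
    using assms by (simp add: fixed_action_value_Suc)
  ultimately show ?case by (simp add: algebra_simps)
qed

lemma Vlow_eq_Max_fixed_action_value:
  assumes "t \<noteq> 0"
  shows "Vlow E zmin beta lam t = Max ((\<lambda>e. fixed_action_value (zmin e) beta lam e t) ` {e \<in> E. e > 0})"
  using assms by (simp add: Vlow_def fixed_action_value_def)

locale channel_user =
  fixes E :: "real set" and zeta :: "nat \<Rightarrow> real \<Rightarrow> real" and P :: "nat \<Rightarrow> nat \<Rightarrow> real"
    and K :: nat and beta :: real and imin imax :: nat
  assumes finite_E: "finite E" and zero_in_E: "0 \<in> E" and E_nonneg: "\<forall>e\<in>E. 0 \<le> e"
    and E_pos: "\<exists>e\<in>E. 0 < e"
    and beta_nonneg: "0 \<le> beta"
    and P_nonneg: "\<forall>i\<in>{1..K}. \<forall>j\<in>{1..K}. 0 \<le> P i j"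
    and P_row_sum: "\<forall>i\<in>{1..K}. (\<Sum>j=1..K. P i j) = 1"
    and zeta_range: "\<forall>i\<in>{1..K}. \<forall>e\<in>E. 0 \<le> zeta i e \<and> zeta i e \<le> 1"
    and imin_min: "\<forall>i\<in>{1..K}. \<forall>e\<in>E. zeta imin e \<le> zeta i e"
    and imin_pos: "\<forall>e\<in>E. 0 < e \<longrightarrow> 0 < zeta imin e"
    and imax_max: "\<forall>i\<in>{1..K}. \<forall>e\<in>E. zeta i e \<le> zeta imax e"
begin

abbreviation V :: "real \<Rightarrow> nat \<Rightarrow> nat \<Rightarrow> real" where
  "V lam t i \<equiv> Vval E zeta P K beta lam t i"

abbreviation expected_next :: "real \<Rightarrow> nat \<Rightarrow> nat \<Rightarrow> real" where
  "expected_next lam t i \<equiv> \<Sum>j=1..K. P i j * V lam t j"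

abbreviation Vl :: "real \<Rightarrow> nat \<Rightarrow> real" where
  "Vl lam t \<equiv> Vlow E (zeta imin) beta lam t"

abbreviation Vu :: "real \<Rightarrow> nat \<Rightarrow> real" where
  "Vu lam t \<equiv> Vup E (zeta imax) (zeta imin) beta lam t"

lemma V_Suc_ge:
  assumes "e \<in> E"
  shows "- lam * e + zeta i e * beta + (1 - zeta i e) * expected_next lam t i \<le> V lam (Suc t) i"
  using assms finite_E by simp

lemma V_Suc_le:
  assumes "\<forall>e\<in>E. - lam * e + zeta i e * beta + (1 - zeta i e) * expected_next lam t i \<le> c"
  shows "V lam (Suc t) i \<le> c"
  unfolding Vval.simps using assms finite_E zero_in_E by (intro Max.boundedI) auto

lemma expected_next_ge:
  assumes "i \<in> {1..K}" "\<forall>j\<in>{1..K}. c \<le> V lam t j"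
  shows "c \<le> expected_next lam t i"
  using assms P_nonneg P_row_sum by (intro convex_comb_ge) auto

lemma expected_next_le:
  assumes "i \<in> {1..K}" "\<forall>j\<in>{1..K}. V lam t j \<le> c"
  shows "expected_next lam t i \<le> c"
  using assms P_nonneg P_row_sum by (intro convex_comb_le) auto

lemma V_nonneg: "i \<in> {1..K} \<Longrightarrow> 0 \<le> V lam t i"
proof (induction t arbitrary: i)
  case 0
  then show ?case by simp
next
  case (Suc t)
  have "0 \<le> expected_next lam t i" using Suc by (intro expected_next_ge) auto
  then have "0 \<le> zeta i 0 * beta + (1 - zeta i 0) * expected_next lam t i"
    using zeta_range zero_in_E beta_nonneg Suc.prems by auto
  also have "\<dots> \<le> V lam (Suc t) i" using V_Suc_ge[OF zero_in_E] by simp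
  finally show ?case .
qed

lemma V_le_beta: "0 \<le> lam \<Longrightarrow> i \<in> {1..K} \<Longrightarrow> V lam t i \<le> beta"
proof (induction t arbitrary: i)
  case 0
  then show ?case using beta_nonneg by simp
next
  case (Suc t)
  have S: "expected_next lam t i \<le> beta" using Suc by (intro expected_next_le) auto
  show ?case
  proof (rule V_Suc_le, intro ballI)
    fix e assume e: "e \<in> E"
    have "(1 - zeta i e) * expected_next lam t i \<le> (1 - zeta i e) * beta"
      using S zeta_range Suc.prems e by (intro mult_left_mono) auto
    moreover have "0 \<le> lam * e" using Suc.prems E_nonneg e by simp
    ultimately show "- lam * e + zeta i e * beta + (1 - zeta i e) * expected_next lam t i \<le> beta"
      by (simp add: algebra_simps)
  qed
qed

text \<open>Compared with the worst channel, state \<open>i\<close> trades \<open>(1 - z) W\<close> for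
  \<open>(\<zeta> - z) \<beta> + (1 - \<zeta>) S\<close>; the gain is \<open>(\<zeta> - z)(\<beta> - W) + (1 - \<zeta>)(S - W) \<ge> 0\<close>.\<close>
lemma fixed_action_value_le_V:
  assumes lam: "0 \<le> lam" and e: "e \<in> E" "0 < e"
  shows "i \<in> {1..K} \<Longrightarrow> fixed_action_value (zeta imin e) beta lam e t \<le> V lam t i"
proof (induction t arbitrary: i)
  case 0
  then show ?case by simp
next
  case (Suc t)
  define z where "z = zeta imin e"
  define W where "W = fixed_action_value z beta lam e t"
  define S where "S = expected_next lam t i"
  have z: "0 < z" "z \<le> zeta i e" "zeta i e \<le> 1"
    using imin_pos imin_min zeta_range Suc.prems e unfolding z_def by auto
  have "W \<le> beta"
    unfolding W_def using z lam e E_nonneg beta_nonneg by (intro fixed_action_value_le) auto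
  moreover have "W \<le> S" unfolding W_def S_def z_def using Suc by (intro expected_next_ge) auto
  ultimately have "0 \<le> (zeta i e - z) * (beta - W) + (1 - zeta i e) * (S - W)"
    using z by (intro add_nonneg_nonneg mult_nonneg_nonneg) auto
  then have "fixed_action_value z beta lam e (Suc t)
      \<le> - lam * e + zeta i e * beta + (1 - zeta i e) * S"
    using z by (simp add: fixed_action_value_Suc W_def algebra_simps)
  also have "\<dots> \<le> V lam (Suc t) i" unfolding S_def by (rule V_Suc_ge[OF e(1)])
  finally show ?case by (simp add: z_def)
qed

lemma Vl_le_V:
  assumes "0 \<le> lam" "i \<in> {1..K}"
  shows "Vl lam t \<le> V lam t i"
proof (cases "t = 0")
  case True
  then show ?thesis by (simp add: Vlow_def)
next
  case False
  have "Vl lam t \<in> (\<lambda>e. fixed_action_value (zeta imin e) beta lam e t) ` {e \<in> E. e > 0}"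
    unfolding Vlow_eq_Max_fixed_action_value[OF False] using finite_E E_pos by (intro Max_in) auto
  then show ?thesis using fixed_action_value_le_V assms by auto
qed

lemma V_Suc_le_expected_next_add:
  assumes lam: "0 \<le> lam" and i: "i \<in> {1..K}"
  shows "V lam (Suc t) i
    \<le> expected_next lam t i + Max ((\<lambda>e. - lam * e + zeta imax e * (beta - max 0 (Vl lam t))) ` E)"
    (is "_ \<le> ?S + Max (?gain ` E)")
proof (rule V_Suc_le, intro ballI)
  fix e assume e: "e \<in> E"
  have "0 \<le> ?S" by (rule expected_next_ge[OF i]) (use V_nonneg in auto)
  moreover have "Vl lam t \<le> ?S" by (rule expected_next_ge[OF i]) (use Vl_le_V[OF lam] in auto)
  ultimately have "max 0 (Vl lam t) \<le> ?S" by simp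
  moreover have "?S \<le> beta" by (rule expected_next_le[OF i]) (use V_le_beta[OF lam] in auto)
  moreover have "0 \<le> zeta i e" "zeta i e \<le> zeta imax e" using zeta_range imax_max i e by auto
  ultimately have "zeta i e * (beta - ?S) \<le> zeta imax e * (beta - max 0 (Vl lam t))"
    by (intro mult_mono) auto
  moreover have "?gain e \<le> Max (?gain ` E)" using finite_E e by simp
  ultimately show "- lam * e + zeta i e * beta + (1 - zeta i e) * ?S \<le> ?S + Max (?gain ` E)"
    by (simp add: algebra_simps)
qed

lemma stationary_V_le_Vu:
  assumes lam: "0 \<le> lam"
    and eta_nonneg: "\<forall>i\<in>{1..K}. 0 \<le> eta i" and eta_sum: "(\<Sum>i=1..K. eta i) = 1"
    and eta_stat: "\<forall>j\<in>{1..K}. (\<Sum>i=1..K. eta i * P i j) = eta j"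
  shows "(\<Sum>i=1..K. eta i * V lam t i) \<le> Vu lam t"
proof (induction t)
  case 0
  then show ?case by simp
next
  case (Suc t)
  define M where "M = Max ((\<lambda>e. - lam * e + zeta imax e * (beta - max 0 (Vl lam t))) ` E)"
  have "(\<Sum>i=1..K. eta i * V lam (Suc t) i) \<le> (\<Sum>i=1..K. eta i * (expected_next lam t i + M))"
    using V_Suc_le_expected_next_add[OF lam] eta_nonneg unfolding M_def
    by (intro sum_mono mult_left_mono) auto
  also have "\<dots> = (\<Sum>i=1..K. eta i * expected_next lam t i) + M"
    using eta_sum by (simp add: distrib_left sum.distrib sum_distrib_right[symmetric])
  also have "\<dots> = (\<Sum>j=1..K. eta j * V lam t j) + M"
    using eta_stat by (simp add: stationary_sum)
  also have "\<dots> \<le> Vu lam (Suc t)" using Suc by (simp add: M_def)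
  finally show ?case .
qed

lemma stationary_V_bounds:
  assumes lam: "0 \<le> lam"
    and eta_nonneg: "\<forall>i\<in>{1..K}. 0 \<le> eta i" and eta_sum: "(\<Sum>i=1..K. eta i) = 1"
    and eta_stat: "\<forall>j\<in>{1..K}. (\<Sum>i=1..K. eta i * P i j) = eta j"
  shows "max 0 (Vl lam t) \<le> (\<Sum>i=1..K. eta i * V lam t i)"
    and "(\<Sum>i=1..K. eta i * V lam t i) \<le> min beta (Vu lam t)"
proof -
  show "max 0 (Vl lam t) \<le> (\<Sum>i=1..K. eta i * V lam t i)"
    using V_nonneg Vl_le_V[OF lam] eta_nonneg eta_sum by (auto intro!: convex_comb_ge)
  have "(\<Sum>i=1..K. eta i * V lam t i) \<le> beta"
    using V_le_beta[OF lam] eta_nonneg eta_sum by (auto intro!: convex_comb_le)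
  then show "(\<Sum>i=1..K. eta i * V lam t i) \<le> min beta (Vu lam t)"
    using stationary_V_le_Vu[OF assms] by simp
qed

end

theorem corollary3:
  fixes N :: nat and B :: real and E :: "real set"
    and K :: "nat \<Rightarrow> nat" and P :: "nat \<Rightarrow> nat \<Rightarrow> nat \<Rightarrow> real"
    and zeta :: "nat \<Rightarrow> nat \<Rightarrow> real \<Rightarrow> real"
    and beta :: "nat \<Rightarrow> real" and tau D :: "nat \<Rightarrow> nat"
    and eta :: "nat \<Rightarrow> nat \<Rightarrow> real" and a :: "nat \<Rightarrow> real"
    and imax imin :: "nat \<Rightarrow> nat"
  assumes B_pos: "B > 0"
    and E_fin: "finite E" and E_nonneg: "\<forall>e\<in>E. e \<ge> 0" and E_zero: "0 \<in> E"
    and E_pos: "\<exists>e\<in>E. e > 0"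
    and beta_nonneg: "\<forall>n\<in>{1..N}. beta n \<ge> 0"
    and tau_pos: "\<forall>n\<in>{1..N}. tau n \<ge> 1"
    and K_pos: "\<forall>n\<in>{1..N}. K n \<ge> 1"
    and P_nonneg: "\<forall>n\<in>{1..N}. \<forall>i\<in>{1..K n}. \<forall>j\<in>{1..K n}. P n i j \<ge> 0"
    and P_stoch: "\<forall>n\<in>{1..N}. \<forall>i\<in>{1..K n}. (\<Sum>j=1..K n. P n i j) = 1"
    and zeta_zero: "\<forall>n\<in>{1..N}. \<forall>i\<in>{1..K n}. zeta n i 0 = 0"
    and zeta_range: "\<forall>n\<in>{1..N}. \<forall>i\<in>{1..K n}. \<forall>e\<in>E. 0 \<le> zeta n i e \<and> zeta n i e \<le> 1"
    and zeta_pos: "\<forall>n\<in>{1..N}. \<forall>i\<in>{1..K n}. \<forall>e\<in>E. e > 0 \<longrightarrow> zeta n i e > 0"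
    and zeta_mono: "\<forall>n\<in>{1..N}. \<forall>i\<in>{1..K n}. \<forall>e\<in>E. \<forall>e'\<in>E. e < e' \<longrightarrow> zeta n i e < zeta n i e'"
    and zeta_total: "\<forall>n\<in>{1..N}. \<forall>i\<in>{1..K n}. \<forall>j\<in>{1..K n}.
        (\<forall>e\<in>E. zeta n i e \<ge> zeta n j e) \<or> (\<forall>e\<in>E. zeta n i e \<le> zeta n j e)"
    and imax_in: "\<forall>n\<in>{1..N}. imax n \<in> {1..K n}"
    and imin_in: "\<forall>n\<in>{1..N}. imin n \<in> {1..K n}"
    and imax_max: "\<forall>n\<in>{1..N}. \<forall>i\<in>{1..K n}. \<forall>e\<in>E. zeta n i e \<le> zeta n (imax n) e"
    and imin_min: "\<forall>n\<in>{1..N}. \<forall>i\<in>{1..K n}. \<forall>e\<in>E. zeta n (imin n) e \<le> zeta n i e"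
    and eta_nonneg: "\<forall>n\<in>{1..N}. \<forall>i\<in>{1..K n}. eta n i \<ge> 0"
    and eta_sum: "\<forall>n\<in>{1..N}. (\<Sum>i=1..K n. eta n i) = 1"
    and eta_stat: "\<forall>n\<in>{1..N}. \<forall>j\<in>{1..K n}. (\<Sum>i=1..K n. eta n i * P n i j) = eta n j"
    and a_nonneg: "\<forall>n\<in>{1..N}. a n \<ge> 0"
  shows "(\<forall>lam\<ge>0. gPl N B a E zeta imin beta tau D lam \<le> gP N B a eta E zeta P K beta tau D lam
              \<and> gP N B a eta E zeta P K beta tau D lam \<le> gPu N B a E zeta imax imin beta tau D lam)
       \<and> (\<exists>ll\<ge>0. \<exists>lp\<ge>0. \<exists>lu\<ge>0.
            (\<forall>lam\<ge>0. gPl N B a E zeta imin beta tau D ll \<le> gPl N B a E zeta imin beta tau D lam)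
          \<and> (\<forall>lam\<ge>0. gP N B a eta E zeta P K beta tau D lp \<le> gP N B a eta E zeta P K beta tau D lam)
          \<and> (\<forall>lam\<ge>0. gPu N B a E zeta imax imin beta tau D lu \<le> gPu N B a E zeta imax imin beta tau D lam)
          \<and> gPl N B a E zeta imin beta tau D ll \<le> gP N B a eta E zeta P K beta tau D lp
          \<and> gP N B a eta E zeta P K beta tau D lp \<le> gPu N B a E zeta imax imin beta tau D lu)"
proof -
  have user: "max 0 (Vlow E (zeta n (imin n)) (beta n) lam (tau n + D n))
      \<le> (\<Sum>i=1..K n. eta n i * Vval E (zeta n) (P n) (K n) (beta n) lam (tau n + D n) i)
    \<and> (\<Sum>i=1..K n. eta n i * Vval E (zeta n) (P n) (K n) (beta n) lam (tau n + D n) i)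
      \<le> min (beta n) (Vup E (zeta n (imax n)) (zeta n (imin n)) (beta n) lam (tau n + D n))"
    if n: "n \<in> {1..N}" and lam: "0 \<le> lam" for n lam
  proof -
    interpret channel_user E "zeta n" "P n" "K n" "beta n" "imin n" "imax n"
      using assms n by unfold_locales auto
    show ?thesis using stationary_V_bounds[OF lam] eta_nonneg eta_sum eta_stat n by auto
  qed
  have sandwich: "\<forall>lam\<ge>0. gPl N B a E zeta imin beta tau D lam \<le> gP N B a eta E zeta P K beta tau D lam
      \<and> gP N B a eta E zeta P K beta tau D lam \<le> gPu N B a E zeta imax imin beta tau D lam"
    unfolding gPl_def gP_def gPu_def using user a_nonneg
    by (auto intro!: add_left_mono sum_mono mult_left_mono)
  have "\<forall>lam\<ge>0. lam * B \<le> gPl N B a E zeta imin beta tau D lam"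
    unfolding gPl_def using a_nonneg by (auto intro!: sum_nonneg)
  moreover have "E \<noteq> {}" using E_zero by auto
  ultimately show ?thesis
    using sandwich sandwiched_minima[OF B_pos] continuous_on_gPl continuous_on_gP continuous_on_gPu
      E_fin by simp
qed

end
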